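(* Fix an integer $p \geq 3$, put $\lambda=\lambda_p=2\cos(\pi/p)$, $S=\begin{pmatrix}1&\lambda\\0&1\end{pmatrix}$, $T=\begin{pmatrix}0&-1\\1&0\end{pmatrix}$ and $U=ST$. Suppose that $\alpha \in \mathbb{R}\cup\{\infty\}$ and $1 \leq i \leq p-1$. Then $\alpha \in \left[U^{p-i+1}(0), U^{p-i}(0)\right)$ if and only if $TU^{i}(\alpha) \in [0,\infty)$, and $\alpha = U^{p-i+1}(0)$ if and only if $TU^{i}(\alpha)=0$.
   Context: Matrices act on $\mathbb{R}\cup\{\infty\}$ as linear fractional transformations: $\begin{pmatrix}a&b\\c&d\end{pmatrix}(z)=\frac{az+b}{cz+d}$ with the usual conventions for $\infty$. One has $0=U^p(0)<U^{p-1}(0)<\cdots<U^2(0)<U(0)=\infty$, so the intervals are meaningful (with $[x,\infty)$ understood for the interval whose right endpoint is $U(0)=\infty$). *)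

theory Defs
  imports Complex_Main
begin

datatype rinf = Fin real | Infty

text \<open>Real 2x2 matrices: \<open>M a b c d\<close> stands for the matrix with rows (a, b) and (c, d).\<close>
datatype mat2 = M real real real real

fun mmul :: "mat2 \<Rightarrow> mat2 \<Rightarrow> mat2" where
  "mmul (M a b c d) (M a' b' c' d') =
     M (a*a' + b*c') (a*b' + b*d') (c*a' + d*c') (c*b' + d*d')"

definition mid :: mat2 where "mid = M 1 0 0 1"

definition mpow :: "mat2 \<Rightarrow> nat \<Rightarrow> mat2" where
  "mpow A n = ((mmul A) ^^ n) mid"

fun act :: "mat2 \<Rightarrow> rinf \<Rightarrow> rinf" where
  "act (M a b c d) (Fin x) = (if c*x + d = 0 then Infty else Fin ((a*x + b) / (c*x + d)))"
| "act (M a b c d) Infty = (if c = 0 then Infty else Fin (a / c))"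

text \<open>Half-open interval \<open>[L, R)\<close> in \<open>\<real> \<union> {\<infinity>}\<close>; when \<open>R = \<infinity>\<close> it is \<open>[L, \<infinity>)\<close>
  (not containing \<infinity>).\<close>
definition in_Ico :: "rinf \<Rightarrow> rinf \<Rightarrow> rinf \<Rightarrow> bool" where
  "in_Ico L R z = (\<exists>l x. L = Fin l \<and> z = Fin x \<and> l \<le> x \<and>
                      (R = Infty \<or> (\<exists>r. R = Fin r \<and> x < r)))"

definition lam :: "nat \<Rightarrow> real" where "lam p = 2 * cos (pi / real p)"
definition Smat :: "nat \<Rightarrow> mat2" where "Smat p = M 1 (lam p) 0 1"
definition Tmat :: mat2 where "Tmat = M 0 (-1) 1 0"
definition Umat :: "nat \<Rightarrow> mat2" where "Umat p = mmul (Smat p) Tmat"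

end

theory Submission
  imports Defs
begin

text \<open>
  Write \<open>s t = sin (t\<pi>/p) / sin (\<pi>/p)\<close>. These numbers satisfy the recurrence
  \<open>s (t+2) = \<lambda> s (t+1) - s t\<close>, so \<open>U\<^sup>n = ((s (n+1), -s n), (s n, -s (n-1)))\<close>; moreover
  \<open>s (p-t) = s t\<close>, \<open>s t > 0\<close> for \<open>0 < t < p\<close>, and \<open>s t\<^sup>2 - s (t-1) s (t+1) = 1\<close>.
  Hence \<open>U\<^sup>p\<^sup>-\<^sup>i\<^sup>+\<^sup>1(0) = s (i-1) / s i\<close>, \<open>U\<^sup>p\<^sup>-\<^sup>i(0) = s i / s (i+1)\<close>, and \<open>TU\<^sup>i\<close> is the
  determinant-one matrix \<open>((-s i, s (i-1)), (s (i+1), -s i))\<close>.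
  For any matrix \<open>((a, b), (c, d))\<close> of determinant one with \<open>a < 0 \<le> c\<close>, the numerator
  \<open>n = ax + b\<close> and denominator \<open>m = cx + d\<close> satisfy \<open>cn - am = -1\<close>, so they are never both
  non-negative; the image of \<open>x\<close> therefore lies in \<open>[0, \<infinity>)\<close> exactly when \<open>n \<le> 0\<close> and
  \<open>m < 0\<close>, i.e. when \<open>x \<in> [-b/a, -d/c)\<close>.
\<close>

lemma act_Fin_nonneg_iff:
  assumes det: "a*d - b*c = 1" and "a < 0" "0 \<le> c"
  shows "(\<exists>y. act (M a b c d) (Fin x) = Fin y \<and> 0 \<le> y) \<longleftrightarrow> a*x + b \<le> 0 \<and> c*x + d < 0"
proof -
  have key: "c * (a*x + b) - a * (c*x + d) = -1"
    using det by (simp add: algebra_simps)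
  have not_both_nonneg: "\<not> (0 \<le> a*x + b \<and> 0 < c*x + d)"
  proof
    assume "0 \<le> a*x + b \<and> 0 < c*x + d"
    then have "0 \<le> c * (a*x + b)" "a * (c*x + d) < 0"
      using \<open>a < 0\<close> \<open>0 \<le> c\<close> by (simp_all add: mult_neg_pos)
    then show False using key by linarith
  qed
  have "a*x + b < 0" if "c*x + d = 0"
  proof -
    have "c * (a*x + b) = -1" using key that by simp
    then show ?thesis using \<open>0 \<le> c\<close> by (smt (verit) mult_nonneg_nonneg)
  qed
  then show ?thesis
    using not_both_nonneg by (auto simp: zero_le_divide_iff)
qed

lemma act_Fin_eq_zero_iff:
  assumes "a*d - b*c \<noteq> 0"
  shows "act (M a b c d) (Fin x) = Fin 0 \<longleftrightarrow> a*x + b = 0"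
proof -
  have "c * (a*x + b) - a * (c*x + d) = - (a*d - b*c)"
    by (simp add: algebra_simps)
  then have "a*x + b = 0 \<Longrightarrow> c*x + d \<noteq> 0"
    using assms by auto
  then show ?thesis by auto
qed

lemma act_Infty_not_nonneg:
  assumes "a < 0" "0 \<le> c"
  shows "\<nexists>y. act (M a b c d) Infty = Fin y \<and> 0 \<le> y"
proof -
  have "c \<noteq> 0 \<Longrightarrow> a / c < 0"
    using assms by (simp add: divide_neg_pos)
  then show ?thesis by auto
qed

lemma in_Ico_Fin_iff:
  "in_Ico (Fin l) R (Fin x) \<longleftrightarrow> l \<le> x \<and> (R = Infty \<or> (\<exists>r. R = Fin r \<and> x < r))"
  by (simp add: in_Ico_def)

lemma act_preimage_nonneg:
  assumes "a*d - b*c = 1" "a < 0" "0 \<le> c"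
  shows "in_Ico (Fin (-b/a)) (if c = 0 then Infty else Fin (-d/c)) z
           \<longleftrightarrow> (\<exists>y. act (M a b c d) z = Fin y \<and> 0 \<le> y)"
proof (cases z)
  case (Fin x)
  have left: "-b/a \<le> x \<longleftrightarrow> a*x + b \<le> 0"
    using neg_divide_le_eq[OF \<open>a < 0\<close>, of "-b" x] by (auto simp: algebra_simps)
  have right: "(c = 0 \<or> x < -d/c) \<longleftrightarrow> c*x + d < 0"
  proof (cases "c = 0")
    case True
    then have "0 < a*d" using assms(1) by simp
    then have "d < 0" using \<open>a < 0\<close> by (simp add: zero_less_mult_iff)
    then show ?thesis using True by simp
  next
    case False
    then have "0 < c" using \<open>0 \<le> c\<close> by simp
    then show ?thesis using False pos_less_divide_eq[of c x "-d"] by (auto simp: algebra_simps)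
  qed
  have "in_Ico (Fin (-b/a)) (if c = 0 then Infty else Fin (-d/c)) (Fin x)
          \<longleftrightarrow> -b/a \<le> x \<and> (c = 0 \<or> x < -d/c)"
    by (simp add: in_Ico_Fin_iff)
  then show ?thesis
    unfolding Fin left right using act_Fin_nonneg_iff[OF assms] by simp
qed (use act_Infty_not_nonneg[OF assms(2,3)] in \<open>auto simp: in_Ico_def\<close>)

lemma act_preimage_zero:
  assumes "a*d - b*c = 1" "a < 0" "0 \<le> c"
  shows "z = Fin (-b/a) \<longleftrightarrow> act (M a b c d) z = Fin 0"
proof (cases z)
  case (Fin x)
  then show ?thesis
    using act_Fin_eq_zero_iff[of a d b c x] assms by (auto simp: field_simps)
qed (use act_Infty_not_nonneg[OF assms(2,3)] in blast)

definition sin_quot :: "nat \<Rightarrow> real \<Rightarrow> real" where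
  "sin_quot p t = sin (t * pi / real p) / sin (pi / real p)"

lemma sin_quot_0 [simp]: "sin_quot p 0 = 0"
  by (simp add: sin_quot_def)

lemma sin_quot_minus [simp]: "sin_quot p (- t) = - sin_quot p t"
  by (simp add: sin_quot_def)

lemma sin_pi_div_pos: "2 \<le> p \<Longrightarrow> 0 < sin (pi / real p)"
  by (intro sin_gt_zero) (auto simp: field_simps)

lemma sin_quot_1 [simp]: "2 \<le> p \<Longrightarrow> sin_quot p 1 = 1"
  using sin_pi_div_pos[of p] by (simp add: sin_quot_def)

lemma sin_quot_add_2:
  "sin_quot p (t + 2) = lam p * sin_quot p (t + 1) - sin_quot p t"
proof -
  define a where "a = pi / real p"
  have "(t + 2) * pi / real p = (t + 1) * a + a" "t * pi / real p = (t + 1) * a - a"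
    "(t + 1) * pi / real p = (t + 1) * a"
    by (simp_all add: a_def add_divide_distrib diff_divide_distrib algebra_simps)
  moreover have "sin ((t + 1) * a + a) + sin ((t + 1) * a - a) = 2 * cos a * sin ((t + 1) * a)"
    by (simp add: sin_add sin_diff)
  ultimately show ?thesis
    by (simp add: sin_quot_def lam_def a_def add_divide_distrib[symmetric]
        diff_divide_distrib[symmetric] algebra_simps)
qed

lemma mpow_Suc: "mpow A (Suc n) = mmul A (mpow A n)"
  by (simp add: mpow_def)

lemma mpow_Umat:
  assumes "2 \<le> p"
  shows "mpow (Umat p) n =
    M (sin_quot p (real n + 1)) (- sin_quot p (real n)) (sin_quot p (real n)) (- sin_quot p (real n - 1))"
proof (induction n)
  case 0
  then show ?case
    using assms by (simp add: mpow_def mid_def)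
next
  case (Suc n)
  have "sin_quot p (real n + 2) = lam p * sin_quot p (real n + 1) - sin_quot p (real n)"
    using sin_quot_add_2[of p "real n"] by simp
  moreover have "sin_quot p (real n + 1) = lam p * sin_quot p (real n) - sin_quot p (real n - 1)"
    using sin_quot_add_2[of p "real n - 1"] by (simp add: add.commute)
  ultimately show ?case
    using Suc by (simp add: mpow_Suc Umat_def Smat_def Tmat_def algebra_simps)
qed

lemma sin_quot_reflect:
  assumes "0 < p"
  shows "sin_quot p (real p - t) = sin_quot p t"
proof -
  have "(real p - t) * pi / real p = pi - t * pi / real p"
    using assms by (simp add: field_simps)
  then show ?thesis by (simp add: sin_quot_def)
qed

lemma sin_quot_pos:
  assumes "2 \<le> p" "0 < t" "t < real p"
  shows "0 < sin_quot p t"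
  unfolding sin_quot_def using assms
  by (intro divide_pos_pos sin_gt_zero) (auto simp: field_simps)

lemma sin_quot_nonneg:
  assumes "2 \<le> p" "0 \<le> t" "t \<le> real p"
  shows "0 \<le> sin_quot p t"
  unfolding sin_quot_def using assms
  by (intro divide_nonneg_nonneg sin_ge_zero) (auto simp: field_simps)

lemma sin_quot_cassini:
  assumes "2 \<le> p"
  shows "sin_quot p t ^ 2 - sin_quot p (t - 1) * sin_quot p (t + 1) = 1"
proof -
  define a where "a = pi / real p"
  define x where "x = t * a"
  have "sin (x - a) * sin (x + a) = (sin x * cos a) ^ 2 - (cos x * sin a) ^ 2"
    by (simp add: sin_add sin_diff power2_eq_square algebra_simps)
  also have "\<dots> = sin x ^ 2 - sin a ^ 2"
    by (simp add: power_mult_distrib cos_squared_eq algebra_simps)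
  finally have numerator: "sin x ^ 2 - sin (x - a) * sin (x + a) = sin a ^ 2"
    by simp
  have "(t - 1) * pi / real p = x - a" "(t + 1) * pi / real p = x + a" "t * pi / real p = x"
    by (simp_all add: x_def a_def algebra_simps add_divide_distrib diff_divide_distrib)
  then have "sin_quot p t ^ 2 - sin_quot p (t - 1) * sin_quot p (t + 1)
      = (sin x ^ 2 - sin (x - a) * sin (x + a)) / sin a ^ 2"
    by (simp add: sin_quot_def a_def[symmetric] power_divide diff_divide_distrib power2_eq_square)
  also have "\<dots> = 1"
    using sin_pi_div_pos[OF assms] numerator by (simp add: a_def)
  finally show ?thesis .
qed

lemma act_Umat_pow_reflect_zero:
  assumes "2 \<le> p" "n \<le> p"
  shows "act (mpow (Umat p) (p - n)) (Fin 0) =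
    (if sin_quot p (real n + 1) = 0 then Infty
     else Fin (sin_quot p (real n) / sin_quot p (real n + 1)))"
proof -
  have "sin_quot p (real (p - n)) = sin_quot p (real n)"
    "sin_quot p (real (p - n) - 1) = sin_quot p (real n + 1)"
    using sin_quot_reflect[of p "real n"] sin_quot_reflect[of p "real n + 1"] assms
    by (simp_all add: of_nat_diff diff_diff_eq)
  then show ?thesis
    using assms(1) by (simp add: mpow_Umat)
qed

theorem lemma1p1:
  fixes p i :: nat and \<alpha> :: rinf
  assumes "p \<ge> 3" and "1 \<le> i" and "i \<le> p - 1"
  shows "(in_Ico (act (mpow (Umat p) (p - i + 1)) (Fin 0)) (act (mpow (Umat p) (p - i)) (Fin 0)) \<alpha>
            \<longleftrightarrow> (\<exists>x. act (mmul Tmat (mpow (Umat p) i)) \<alpha> = Fin x \<and> 0 \<le> x))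
       \<and> (\<alpha> = act (mpow (Umat p) (p - i + 1)) (Fin 0)
            \<longleftrightarrow> act (mmul Tmat (mpow (Umat p) i)) \<alpha> = Fin 0)"
proof -
  have p: "2 \<le> p" using assms by simp
  define A B C where "A = sin_quot p (real i - 1)" and "B = sin_quot p (real i)"
    and "C = sin_quot p (real i + 1)"
  have "0 < B" unfolding B_def using assms by (intro sin_quot_pos) auto
  have "0 \<le> C" unfolding C_def using assms by (intro sin_quot_nonneg) auto
  have det: "(-B) * (-B) - A * C = 1"
    using sin_quot_cassini[OF p, of "real i"] by (simp add: A_def B_def C_def power2_eq_square)
  have TU: "mmul Tmat (mpow (Umat p) i) = M (-B) A C (-B)"
    by (simp add: mpow_Umat[OF p] Tmat_def A_def B_def C_def)
  have "p - i + 1 = p - (i - 1)"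
    using assms by simp
  then have L: "act (mpow (Umat p) (p - i + 1)) (Fin 0) = Fin (A / B)"
    using act_Umat_pow_reflect_zero[OF p, of "i - 1"] \<open>0 < B\<close> assms
    by (simp add: A_def B_def of_nat_diff)
  have R: "act (mpow (Umat p) (p - i)) (Fin 0) = (if C = 0 then Infty else Fin (B / C))"
    using act_Umat_pow_reflect_zero[OF p, of i] assms by (simp add: B_def C_def)
  have "-B < 0"
    using \<open>0 < B\<close> by simp
  note nonneg = act_preimage_nonneg[OF det this \<open>0 \<le> C\<close>, of \<alpha>]
   and zero = act_preimage_zero[OF det this \<open>0 \<le> C\<close>, of \<alpha>]
  show ?thesis
    using nonneg zero unfolding L R TU minus_divide_divide minus_minus by blast
qed

end
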